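(* For all $n,k \in \mathbb{N}$ with $n \geq k$, the integer $k!\,c_{n,k}$ is a multiple of $q_{n,k}$ (equivalently, $c_{n,k}$ is a multiple of the rational number $q_{n,k}/k!$, i.e. $c_{n,k}k!/q_{n,k} \in \mathbb{Z}$).
   Context: For $n \in \mathbb{N}$, $E_n$ denotes the set of polynomials $P \in \mathbb{C}[X]$ of degree $\leq n$ (including the zero polynomial) such that $P(\mathbb{Z}) \subset \mathbb{Z}$. For $n,k \in \mathbb{N}$, $c_{n,k}$ is the smallest positive integer such that $c_{n,k} P^{(k)} \in E_n$ for every $P \in E_n$, where $P^{(k)}$ is the $k$-th derivative. For $n,k \in \mathbb{N}$ with $n \geq k$, $$q_{n,k} = \mathrm{lcm}\{i_1 i_2 \cdots i_k : i_1,\dots,i_k \in \mathbb{N}^*,\ i_1+\dots+i_k \leq n\},$$ with the convention $q_{n,0} = 1$; $\mathbb{N}^*$ denotes the positive integers. *)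

theory Defs
  imports Complex_Main "HOL-Computational_Algebra.Polynomial"
begin

text \<open>E_n: complex polynomials of degree at most n mapping the integers into the integers
  (the zero polynomial is included since its degree is 0).\<close>
definition E :: "nat \<Rightarrow> complex poly set" where
  "E n = {P. degree P \<le> n \<and> (\<forall>m::int. poly P (of_int m) \<in> \<int>)}"

definition c :: "nat \<Rightarrow> nat \<Rightarrow> nat" where
  "c n k = (LEAST c::nat. c > 0 \<and> (\<forall>P \<in> E n. smult (of_nat c) ((pderiv ^^ k) P) \<in> E n))"

definition q :: "nat \<Rightarrow> nat \<Rightarrow> nat" where
  "q n k = (if k = 0 then 1 else
     Lcm {prod_list xs | xs. length xs = k \<and> (\<forall>i \<in> set xs. i > 0) \<and> sum_list xs \<le> n})"

end

(*
  For positive i_1, ..., i_k with sum at most n, the product P of the binomial polynomials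
  X choose i_j is integer valued of degree at most n, so c_{n,k} P^(k)(0) is an integer.
  Each factor vanishes at 0 and has linear coefficient (-1)^(i_j - 1) / i_j, hence
  P^(k)(0) = k! [X^k] P = +-k! / (i_1 ... i_k); thus every product i_1 ... i_k, and therefore
  their lcm q_{n,k}, divides k! c_{n,k}.  That c_{n,k} exists at all follows from Lagrange
  interpolation at 0, ..., n: a fixed integer multiple of every P in E_n has integer coefficients,
  and so do its derivatives.
*)
theory Submission
  imports Defs
begin

definition int_coeffs :: "'a::comm_ring_1 poly \<Rightarrow> bool" where
  "int_coeffs p \<longleftrightarrow> (\<forall>i. coeff p i \<in> \<int>)"

lemma int_coeffs_mult: "int_coeffs p \<Longrightarrow> int_coeffs r \<Longrightarrow> int_coeffs (p * r)"
  by (auto simp: int_coeffs_def coeff_mult intro!: Ints_sum)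

lemma int_coeffs_1: "int_coeffs 1"
  by (simp add: int_coeffs_def coeff_1)

lemma int_coeffs_prod: "(\<And>x. x \<in> S \<Longrightarrow> int_coeffs (f x)) \<Longrightarrow> int_coeffs (prod f S)"
  by (induction S rule: infinite_finite_induct) (auto intro: int_coeffs_mult int_coeffs_1)

lemma int_coeffs_linear: "a \<in> \<int> \<Longrightarrow> b \<in> \<int> \<Longrightarrow> int_coeffs [:a, b:]"
  by (auto simp: int_coeffs_def coeff_pCons split: nat.splits)

lemma int_coeffs_higher_pderiv: "int_coeffs p \<Longrightarrow> int_coeffs ((pderiv ^^ k) p)"
  by (auto simp: int_coeffs_def coeff_higher_pderiv pochhammer_of_nat simp flip: of_nat_Suc)

lemma poly_in_Ints: "int_coeffs p \<Longrightarrow> x \<in> \<int> \<Longrightarrow> poly p x \<in> \<int>"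
  by (auto simp: int_coeffs_def poly_altdef)

lemma lagrange_basis_values:
  fixes i m n :: nat
  assumes "i \<le> n" "m \<le> n"
  shows "poly (\<Prod>j\<in>{..n}-{m}. [:- of_nat j, 1:]) (of_nat i :: 'a::field_char_0)
           = (if i = m then of_int (\<Prod>j\<in>{..n}-{m}. int m - int j) else 0)"
  using assms by (auto simp: poly_prod prod_zero_iff)

lemma lagrange_interpolation:
  fixes P :: "'a::field_char_0 poly"
  assumes "degree P \<le> n"
  shows "P = (\<Sum>m\<le>n. smult (poly P (of_nat m) / of_int (\<Prod>j\<in>{..n}-{m}. int m - int j))
                          (\<Prod>j\<in>{..n}-{m}. [:- of_nat j, 1:]))" (is "P = ?L")
proof (rule poly_eqI_degree[where A = "of_nat ` {..n}"])
  show "poly P x = poly ?L x" if "x \<in> of_nat ` {..n}" for x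
  proof -
    from that obtain i where i: "i \<le> n" "x = of_nat i" by auto
    have "poly ?L x = (\<Sum>m\<le>n. if m = i then poly P x else 0)"
      unfolding poly_sum using i by (intro sum.cong) (auto simp: lagrange_basis_values prod_zero_iff)
    then show ?thesis using i by simp
  qed
  have card: "card (of_nat ` {..n} :: 'a set) = Suc n"
    by (subst card_image) (auto simp: inj_on_def)
  then show "degree P < card (of_nat ` {..n} :: 'a set)"
    using assms by simp
  have "degree (\<Prod>j\<in>{..n}-{m}. [:- of_nat j, 1 :: 'a:]) \<le> n" if "m \<le> n" for m
  proof -
    have "degree (\<Prod>j\<in>{..n}-{m}. [:- of_nat j, 1 :: 'a:]) \<le> card ({..n} - {m})"
      using degree_prod_sum_le[of "{..n}-{m}" "\<lambda>j. [:- of_nat j, 1 :: 'a:]"] by (simp add: o_def)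
    then show ?thesis using that by simp
  qed
  then have "degree ?L \<le> n"
    by (intro degree_sum_le) (auto intro: order.trans[OF degree_smult_le])
  then show "degree ?L < card (of_nat ` {..n} :: 'a set)"
    using card by simp
qed

lemma int_valued_poly_common_denominator:
  fixes n :: nat
  obtains D :: int where "D > 0"
    and "\<And>P :: 'a::field_char_0 poly. degree P \<le> n \<Longrightarrow> (\<And>m. m \<le> n \<Longrightarrow> poly P (of_nat m) \<in> \<int>)
           \<Longrightarrow> int_coeffs (smult (of_int D) P)"
proof
  define d where "d m = (\<Prod>j\<in>{..n}-{m}. int m - int j)" for m
  define D where "D = \<bar>\<Prod>m\<le>n. d m\<bar>"
  have d_nonzero: "d m \<noteq> 0" for m
    by (auto simp: d_def prod_zero_iff)
  then show "D > 0"
    by (auto simp: D_def prod_zero_iff)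
  have quotient_in_Ints: "(of_int D / of_int (d m) :: 'a) \<in> \<int>" if "m \<le> n" for m
    using that by (auto simp: of_int_div_of_int_in_Ints_iff D_def intro: dvd_prodI)
  have basis_int_coeffs: "int_coeffs (\<Prod>j\<in>{..n}-{m}. [:- of_nat j, 1 :: 'a:])" for m
    by (intro int_coeffs_prod int_coeffs_linear) auto
  fix P :: "'a poly"
  assume deg: "degree P \<le> n" and int_valued: "\<And>m. m \<le> n \<Longrightarrow> poly P (of_nat m) \<in> \<int>"
  have "coeff (smult (of_int D) P) i \<in> \<int>" for i
  proof -
    have "coeff (smult (of_int D) P) i = (\<Sum>m\<le>n. poly P (of_nat m) * (of_int D / of_int (d m))
                                         * coeff (\<Prod>j\<in>{..n}-{m}. [:- of_nat j, 1:]) i)"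
      by (subst lagrange_interpolation[OF deg])
         (simp add: d_def coeff_sum sum_distrib_left mult_ac)
    also have "\<dots> \<in> \<int>"
      using int_valued quotient_in_Ints basis_int_coeffs
      by (intro Ints_sum Ints_mult) (auto simp: int_coeffs_def)
    finally show ?thesis .
  qed
  then show "int_coeffs (smult (of_int D) P)"
    by (simp add: int_coeffs_def)
qed

lemma ex_smult_higher_pderiv_in_E:
  "\<exists>c0::nat. c0 > 0 \<and> (\<forall>P \<in> E n. smult (of_nat c0) ((pderiv ^^ k) P) \<in> E n)"
proof -
  obtain D :: int where "D > 0" and D: "\<And>P :: complex poly. degree P \<le> n
      \<Longrightarrow> (\<And>m. m \<le> n \<Longrightarrow> poly P (of_nat m) \<in> \<int>) \<Longrightarrow> int_coeffs (smult (of_int D) P)"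
    using int_valued_poly_common_denominator[of n, where 'a = complex] by blast
  have "smult (of_nat (nat D)) ((pderiv ^^ k) P) \<in> E n" if "P \<in> E n" for P
  proof -
    from that have deg: "degree P \<le> n" and int_valued: "\<And>m::int. poly P (of_int m) \<in> \<int>"
      by (auto simp: E_def)
    have "int_coeffs (smult (of_int D) P)"
      using int_valued[of "int _"] by (intro D deg) simp
    then have "int_coeffs ((pderiv ^^ k) (smult (of_int D) P))"
      by (rule int_coeffs_higher_pderiv)
    then have "int_coeffs (smult (of_nat (nat D)) ((pderiv ^^ k) P))"
      using \<open>D > 0\<close> by (simp add: higher_pderiv_smult)
    moreover have "degree (smult (of_nat (nat D)) ((pderiv ^^ k) P)) \<le> n"
      using deg by (auto simp: degree_higher_pderiv)
    ultimately show ?thesis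
      unfolding E_def using poly_in_Ints Ints_of_int by blast
  qed
  then show ?thesis
    using \<open>D > 0\<close> by (intro exI[of _ "nat D"]) auto
qed

lemma smult_c_higher_pderiv_in_E: "P \<in> E n \<Longrightarrow> smult (of_nat (c n k)) ((pderiv ^^ k) P) \<in> E n"
  using LeastI_ex[OF ex_smult_higher_pderiv_in_E] unfolding c_def by blast

lemma coeff_prod_list_vanishing_at_0:
  fixes ps :: "'a::comm_semiring_1 poly list"
  assumes "\<forall>p\<in>set ps. coeff p 0 = 0"
  shows "coeff (prod_list ps) (length ps) = (\<Prod>p\<leftarrow>ps. coeff p 1)"
proof -
  have "\<exists>r. prod_list ps = monom 1 (length ps) * r \<and> coeff r 0 = (\<Prod>p\<leftarrow>ps. coeff p 1)"
    using assms
  proof (induction ps)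
    case Nil
    then show ?case by (auto simp: monom_0)
  next
    case (Cons p ps)
    then obtain r where r: "prod_list ps = monom 1 (length ps) * r" "coeff r 0 = (\<Prod>p\<leftarrow>ps. coeff p 1)"
      by auto
    obtain a p' where "p = pCons a p'"
      by (cases p)
    with Cons.prems have p: "p = pCons 0 p'"
      by simp
    have "prod_list (p # ps) = monom 1 (length (p # ps)) * (p' * r)"
      by (simp add: p r monom_Suc mult_ac)
    moreover have "coeff (p' * r) 0 = (\<Prod>p\<leftarrow>p # ps. coeff p 1)"
      by (simp add: p r coeff_mult_0 coeff_pCons)
    ultimately show ?case by blast
  qed
  then show ?thesis
    by (auto simp: coeff_monom_mult)
qed

definition binomial_poly :: "nat \<Rightarrow> 'a::field_char_0 poly" where
  "binomial_poly i = smult (1 / fact i) (\<Prod>j<i. [:- of_nat j, 1:])"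

lemma poly_binomial_poly: "poly (binomial_poly i) x = x gchoose i"
  by (simp add: binomial_poly_def gbinomial_prod_rev poly_prod atLeast0LessThan)

lemma gbinomial_of_int_in_Ints: "(of_int m :: 'a::field_char_0) gchoose i \<in> \<int>"
proof (cases "m \<ge> 0")
  case True
  then have "(of_int m :: 'a) = of_nat (nat m)" by simp
  then show ?thesis by (simp flip: binomial_gbinomial)
next
  case False
  then have "(of_nat i - of_int m - 1 :: 'a) = of_nat (nat (int i - m - 1))" by simp
  then show ?thesis
    by (subst gbinomial_negated_upper) (simp flip: binomial_gbinomial)
qed

lemma degree_binomial_poly: "degree (binomial_poly i) \<le> i"
proof -
  have "degree (binomial_poly i :: 'a poly) \<le> degree (\<Prod>j<i. [:- of_nat j, 1 :: 'a:])"
    unfolding binomial_poly_def by (rule degree_smult_le)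
  also have "\<dots> \<le> i"
    using degree_prod_sum_le[of "{..<i}" "\<lambda>j. [:- of_nat j, 1 :: 'a:]"] by (simp add: o_def)
  finally show ?thesis .
qed

lemma binomial_poly_pCons:
  assumes "i > 0"
  shows "binomial_poly i = pCons 0 (smult (1 / fact i) (\<Prod>j\<in>{1..<i}. [:- of_nat j, 1 :: 'a::field_char_0:]))"
  using assms by (simp add: binomial_poly_def lessThan_atLeast0 prod.atLeast_Suc_lessThan)

lemma coeff_binomial_poly_0: "i > 0 \<Longrightarrow> coeff (binomial_poly i) 0 = 0"
  by (simp add: binomial_poly_pCons)

lemma coeff_binomial_poly_1:
  assumes "i > 0"
  shows "coeff (binomial_poly i :: 'a::field_char_0 poly) 1 = (-1) ^ (i - 1) / of_nat i"
proof -
  have "{1..<i} = {1..i - 1}"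
    using assms by auto
  then have "(\<Prod>j\<in>{1..<i}. - (of_nat j :: 'a)) = (-1) ^ (i - 1) * fact (i - 1)"
    by (simp add: prod_uminus fact_prod)
  moreover have "(fact i :: 'a) = of_nat i * fact (i - 1)"
    using assms by (rule fact_reduce)
  ultimately show ?thesis
    using assms by (simp add: binomial_poly_pCons coeff_pCons poly_prod flip: poly_0_coeff_0)
qed

lemma prod_binomial_poly_in_E:
  assumes "sum_list xs \<le> n"
  shows "prod_list (map binomial_poly xs) \<in> E n"
proof -
  have "degree (prod_list (map binomial_poly xs) :: complex poly) \<le> sum_list xs"
    by (induction xs) (auto intro: order.trans[OF degree_mult_le] add_mono degree_binomial_poly)
  moreover have "poly (prod_list (map binomial_poly xs)) (of_int m :: complex) \<in> \<int>" for m
    by (induction xs) (auto simp: poly_binomial_poly gbinomial_of_int_in_Ints)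
  ultimately show ?thesis
    using assms by (auto simp: E_def)
qed

lemma coeff_prod_binomial_poly:
  assumes "\<forall>i\<in>set xs. i > 0"
  shows "coeff (prod_list (map binomial_poly xs) :: 'a::field_char_0 poly) (length xs)
           = (-1) ^ (\<Sum>i\<leftarrow>xs. i - 1) / of_nat (prod_list xs)"
proof -
  have "coeff (prod_list (map binomial_poly xs) :: 'a poly) (length xs)
          = (\<Prod>i\<leftarrow>xs. coeff (binomial_poly i :: 'a poly) 1)"
    using assms coeff_prod_list_vanishing_at_0[of "map binomial_poly xs"]
    by (auto simp: coeff_binomial_poly_0 o_def)
  also have "\<dots> = (-1) ^ (\<Sum>i\<leftarrow>xs. i - 1) / of_nat (prod_list xs)"
    using assms
  proof (induction xs)
    case (Cons i xs)
    have "(\<Sum>i\<leftarrow>i # xs. i - 1) = (i - 1) + (\<Sum>i\<leftarrow>xs. i - 1)"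
      by simp
    then have "(-1 :: 'a) ^ (\<Sum>i\<leftarrow>i # xs. i - 1) = (-1) ^ (i - 1) * (-1) ^ (\<Sum>i\<leftarrow>xs. i - 1)"
      by (simp only: power_add)
    with Cons show ?case
      by (simp add: coeff_binomial_poly_1[unfolded One_nat_def])
  qed simp
  finally show ?thesis .
qed

lemma prod_list_dvd_fact_mult_c:
  assumes "length xs = k" and "\<forall>i\<in>set xs. i > 0" and "sum_list xs \<le> n"
  shows "prod_list xs dvd fact k * c n k"
proof -
  define P :: "complex poly" where "P = prod_list (map binomial_poly xs)"
  define e where "e = (\<Sum>i\<leftarrow>xs. i - 1)"
  have "smult (of_nat (c n k)) ((pderiv ^^ k) P) \<in> E n"
    unfolding P_def by (intro smult_c_higher_pderiv_in_E prod_binomial_poly_in_E assms(3))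
  then have "poly (smult (of_nat (c n k)) ((pderiv ^^ k) P)) (of_int 0) \<in> \<int>"
    unfolding E_def by blast
  then have "of_nat (c n k) * fact k * coeff P k \<in> \<int>"
    by (simp add: poly_0_coeff_0 coeff_higher_pderiv pochhammer_fact mult.assoc)
  moreover have sign_square: "(-1 :: complex) ^ e * (-1) ^ e = 1"
    by (simp flip: power_mult_distrib)
  have "(of_nat (fact k * c n k) / of_nat (prod_list xs) :: complex)
               = (-1) ^ e * (of_nat (c n k) * fact k * coeff P k)"
    using assms(2) sign_square by (simp add: P_def e_def coeff_prod_binomial_poly flip: assms(1))
  ultimately have "(of_int (int (fact k * c n k)) / of_int (int (prod_list xs)) :: complex) \<in> \<int>"
    by simp
  then have "int (prod_list xs) = 0 \<or> int (prod_list xs) dvd int (fact k * c n k)"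
    by (simp only: of_int_div_of_int_in_Ints_iff)
  moreover have "prod_list xs \<noteq> 0"
    using assms(2) by (auto simp: prod_list_zero_iff)
  ultimately show ?thesis
    by (simp only: int_dvd_int_iff of_nat_eq_0_iff simp_thms)
qed

theorem theorem3:
  fixes n k :: nat
  assumes "n \<ge> k"
  shows "q n k dvd fact k * c n k"
proof (cases "k = 0")
  case True
  then show ?thesis by (simp add: q_def)
next
  case False
  then show ?thesis
    unfolding q_def by (auto intro!: Lcm_least prod_list_dvd_fact_mult_c)
qed

end
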